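(* Let $\sigma^2>0$ (with $\sigma>0$), let $P_X$ be a distribution on $\mathbb{R}^d$, let $\phi^r:\mathbb{R}^d\to\mathbb{R}^r$ be a feature map, let $L\in\mathbb{R}^{r\times r}$ be a fixed matrix and $\phi^L(x):=L^\top\phi^r(x)$. Assume $\|\phi^L(x)\|_2\le K$ for all $x$ (training and test points) and that $\Sigma:=\mathbb{E}_{x\sim P_X}[\phi^L(x)\phi^L(x)^\top]$ satisfies $\lambda_{\min}(\Sigma)>0$. Let $\delta>0$ and $N\ge k\ge\frac83\log\left(\frac{4r}{\delta}\right)\left(\frac{4K^2}{\lambda_{\min}(\Sigma)}\right)^2$. Let $\mathbf{x}_1,\ldots,\mathbf{x}_N\sim P_X$ be i.i.d. and $s_1,\ldots,s_k\in\{1,\ldots,N\}$ drawn uniformly without replacement; define $\hat\Sigma_N:=\frac1N\sum_{i=1}^N\phi^L(\mathbf{x}_i)\phi^L(\mathbf{x}_i)^\top$ and $\hat\Sigma_k:=\frac1k\sum_{i=1}^k\phi^L(\mathbf{x}_{s_i})\phi^L(\mathbf{x}_{s_i})^\top$. For test points $\mathbf{x}'_1,\ldots,\mathbf{x}'_{N'}$ let $\Phi^L_{\mathbf{x}'}$ have rows $\phi^L(\mathbf{x}'_i)^\top$ and define $$S^B_{\mathbf{x}',\mathbf{x}'}:=\Phi^L_{\mathbf{x}'}\Big(\tfrac{1}{\sigma^2}N\hat\Sigma_N+I_r\Big)^{-1}\Phi^{L\top}_{\mathbf{x}'},\qquad S^{B,k}_{\mathbf{x}',\mathbf{x}'}:=\Phi^L_{\mathbf{x}'}\Big(\tfrac{1}{\sigma^2}N\hat\Sigma_k+I_r\Big)^{-1}\Phi^{L\top}_{\mathbf{x}'}.$$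 Then with probability at least $1-\delta$, for any $N'$ test points $\mathbf{x}'_1,\ldots,\mathbf{x}'_{N'}$, $$\big\|S^{B,k}_{\mathbf{x}',\mathbf{x}'}-S^B_{\mathbf{x}',\mathbf{x}'}\big\|_2\le N'\,\frac{4K^4}{\left(\sigma/N+\sigma^{-1}\lambda_{\min}(\Sigma)/2\right)^2}\,\frac1N\sqrt{\frac{8}{3k}\log(4r/\delta)}.$$
   Context: $\|\cdot\|_2$ is the spectral norm and $\lambda_{\min}$ the smallest eigenvalue. $S^B$ is the full-data predictive covariance with features $\phi^L$ and noise variance $\sigma^2$; $S^{B,k}$ is its subsampled approximation. *)

theory Defs
  imports "HOL-Probability.Probability"
begin

definition outer :: "real^'r \<Rightarrow> real^'r^'r" where
  "outer v = (\<chi> i j. v$i * v$j)"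

text \<open>Real eigenvalues of a square real matrix, and the smallest one
  (used for symmetric matrices, whose eigenvalues are all real).\<close>
definition eigenvalues :: "real^'n^'n \<Rightarrow> real set" where
  "eigenvalues A = {c. \<exists>v. v \<noteq> 0 \<and> A *v v = c *\<^sub>R v}"

definition lambda_min :: "real^'n^'n \<Rightarrow> real" where
  "lambda_min A = Min (eigenvalues A)"

definition spec_norm :: "nat \<Rightarrow> (nat \<Rightarrow> nat \<Rightarrow> real) \<Rightarrow> real" where
  "spec_norm n S = (SUP v \<in> {v :: nat \<Rightarrow> real. (\<Sum>j<n. (v j)\<^sup>2) \<le> 1}.
      sqrt (\<Sum>i<n. (\<Sum>j<n. S i j * v j)\<^sup>2))"

text \<open>Ordered samples of k distinct indices from {0..<N} (sampling without replacement).\<close>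
definition inj_samples :: "nat \<Rightarrow> nat \<Rightarrow> (nat \<Rightarrow> nat) set" where
  "inj_samples N k = {s. s \<in> {..<k} \<rightarrow>\<^sub>E {..<N} \<and> inj_on s {..<k}}"

definition S_mat :: "('d \<Rightarrow> real^'r) \<Rightarrow> real^'r^'r \<Rightarrow> (nat \<Rightarrow> 'd) \<Rightarrow> nat \<Rightarrow> nat \<Rightarrow> real" where
  "S_mat phiL A xt = (\<lambda>i j. phiL (xt i) \<bullet> (matrix_inv A *v phiL (xt j)))"

end

theory Submission
  imports Defs
begin

text \<open>
  Write \<open>A = (N/\<sigma>\<^sup>2) S + I\<close> for \<open>S\<close> either of the empirical second moments.
  If \<open>\<parallel>S - \<Sigma>\<parallel> \<le> t \<le> \<lambda>\<^sub>m\<^sub>i\<^sub>n(\<Sigma>)/2\<close> in Frobenius norm (the norm of \<open>real^'r^'r\<close>, which dominates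
  the operator norm), then \<open>A\<close> is coercive with constant \<open>c = 1 + (N/\<sigma>\<^sup>2) \<lambda>\<^sub>m\<^sub>i\<^sub>n(\<Sigma>)/2\<close>, and
  \<open>A\<^sub>k\<^sup>-\<^sup>1 - A\<^sub>N\<^sup>-\<^sup>1 = A\<^sub>k\<^sup>-\<^sup>1 (A\<^sub>N - A\<^sub>k) A\<^sub>N\<^sup>-\<^sup>1\<close> has operator norm at most \<open>(N/\<sigma>\<^sup>2) 2t / c\<^sup>2\<close>.
  Since the test features have norm at most \<open>K\<close>, the \<open>N'\<times>N'\<close> matrix \<open>S\<^sup>B\<^sup>,\<^sup>k - S\<^sup>B\<close> then has
  spectral norm at most \<open>N' K\<^sup>2 (N/\<sigma>\<^sup>2) 2t / c\<^sup>2\<close>, which is the claimed bound for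
  \<open>t = 2K\<^sup>2 sqrt(8 log(4r/\<delta>)/(3k))\<close>; the sample size condition is exactly \<open>t \<le> \<lambda>\<^sub>m\<^sub>i\<^sub>n(\<Sigma>)/2\<close>.

  Both deviations are at most \<open>t\<close> with probability \<open>1 - \<delta>\<close>. The matrices
  \<open>\<phi>\<phi>\<^sup>T - \<Sigma>\<close> are i.i.d., centred and bounded by \<open>2K\<^sup>2\<close>, so the norm of a mean of \<open>m\<close> of them
  has expectation at most \<open>2K\<^sup>2/\<surd>m\<close> (second moment) and, by McDiarmid's bounded difference
  inequality, exceeds it by \<open>\<surd>2 K\<^sup>2 sqrt(2 log(2/\<delta>)/m)\<close> with probability at most \<open>\<delta>/2\<close>.
  This is applied to the full sample and, for each fixed choice of the subsample indices,
  to the subsample; averaging over the uniform choice of indices gives the event.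
\<close>

section \<open>Symmetric matrices\<close>

lemma norm_matrix_vector_mult_le: "norm ((A::real^'n^'m) *v x) \<le> norm A * norm x"
proof -
  have "(A *v x) $ i = A$i \<bullet> x" for i
    by (simp add: matrix_vector_mult_def inner_vec_def mult.commute)
  moreover have "(norm (A *v x))\<^sup>2 = (\<Sum>i\<in>UNIV. ((A *v x)$i)\<^sup>2)"
    unfolding power2_norm_eq_inner inner_vec_def by (simp add: power2_eq_square)
  ultimately have "(norm (A *v x))\<^sup>2 = (\<Sum>i\<in>UNIV. (A$i \<bullet> x)\<^sup>2)"
    by simp
  also have "\<dots> \<le> (\<Sum>i\<in>UNIV. (norm (A$i) * norm x)\<^sup>2)"
    using power_mono[OF Cauchy_Schwarz_ineq2 abs_ge_zero, of "A$_" x 2] by (intro sum_mono) simp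
  also have "\<dots> = (norm A * norm x)\<^sup>2"
  proof -
    have "(norm A)\<^sup>2 = (\<Sum>i\<in>UNIV. A$i \<bullet> A$i)"
      unfolding power2_norm_eq_inner[of A] inner_vec_def ..
    then show ?thesis
      by (simp add: power_mult_distrib sum_distrib_right power2_norm_eq_inner)
  qed
  finally show ?thesis
    by (rule power2_le_imp_le) simp
qed

lemma abs_inner_matrix_vector_mult_le: "\<bar>v \<bullet> ((A::real^'n^'n) *v v)\<bar> \<le> norm A * (norm v)\<^sup>2"
proof -
  have "\<bar>v \<bullet> (A *v v)\<bar> \<le> norm v * norm (A *v v)" by (rule Cauchy_Schwarz_ineq2)
  also have "\<dots> \<le> norm v * (norm A * norm v)"
    by (intro mult_left_mono norm_matrix_vector_mult_le) auto
  finally show ?thesis by (simp only: power2_eq_square mult_ac)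
qed

lemma inner_matrix_vector_mult_symmetric:
  assumes "transpose S = (S::real^'n^'n)"
  shows "u \<bullet> (S *v v) = v \<bullet> (S *v u)"
  by (metis assms dot_lmul_matrix inner_commute transpose_matrix_vector)

lemma transpose_diff: "transpose (A - B) = transpose A - transpose (B::'a::ab_group_add^'n^'m)"
  by (simp add: transpose_def vec_eq_iff)

lemma matrix_inv_right: "invertible A \<Longrightarrow> A ** matrix_inv A = mat 1"
  and matrix_inv_left: "invertible A \<Longrightarrow> matrix_inv A ** A = mat 1"
  unfolding invertible_def matrix_inv_def by (metis (mono_tags, lifting) someI_ex)+

lemma matrix_inv_diff_vector:
  fixes A B :: "real^'n^'n"
  assumes "invertible A" "invertible B"
  shows "matrix_inv A *v w - matrix_inv B *v w = matrix_inv A *v ((B - A) *v (matrix_inv B *v w))"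
proof -
  define u where "u = matrix_inv B *v w"
  have "matrix_inv A *v ((B - A) *v u) = matrix_inv A *v (B *v u) - matrix_inv A *v (A *v u)"
    by (simp only: matrix_vector_mult_diff_rdistrib matrix_vector_mult_diff_distrib)
  also have "B *v u = w"
    unfolding u_def using assms by (simp add: matrix_vector_mul_assoc matrix_inv_right)
  also have "matrix_inv A *v (A *v u) = u"
    using assms by (simp add: matrix_vector_mul_assoc matrix_inv_left)
  finally show ?thesis by (simp add: u_def)
qed

lemma coercive_imp_invertible:
  fixes A :: "real^'n^'n"
  assumes "c > 0" and "\<And>v. c * (norm v)\<^sup>2 \<le> v \<bullet> (A *v v)"
  shows "invertible A"
proof -
  have "x = 0" if "A *v x = 0" for x
    using assms(2)[of x] that \<open>c > 0\<close> by (simp add: mult_le_0_iff)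
  then show ?thesis
    using matrix_left_invertible_ker invertible_left_inverse by blast
qed

lemma norm_matrix_inv_vector_le_coercive:
  fixes A :: "real^'n^'n"
  assumes c: "c > 0" and coercive: "\<And>v. c * (norm v)\<^sup>2 \<le> v \<bullet> (A *v v)"
  shows "norm (matrix_inv A *v w) \<le> norm w / c"
proof -
  define u where "u = matrix_inv A *v w"
  have "A *v u = w"
    using coercive_imp_invertible[OF assms]
    by (simp add: u_def matrix_vector_mul_assoc matrix_inv_right)
  then have "c * (norm u)\<^sup>2 \<le> norm u * norm w"
    using coercive[of u] norm_cauchy_schwarz[of u w] by simp
  then have "c * norm u \<le> norm w"
    by (cases "u = 0") (simp_all add: power2_eq_square)
  with c show ?thesis by (simp add: u_def field_simps)
qed

lemma finite_eigenvalues_symmetric: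
  fixes S :: "real^'n^'n"
  assumes sym: "transpose S = S"
  shows "finite (eigenvalues S)"
proof -
  define e where "e c = (SOME v. v \<noteq> 0 \<and> S *v v = c *\<^sub>R v)" for c
  have e: "e c \<noteq> 0 \<and> S *v e c = c *\<^sub>R e c" if "c \<in> eigenvalues S" for c
    using that unfolding eigenvalues_def e_def by (rule CollectE) (rule someI_ex)
  have inj: "inj_on e (eigenvalues S)"
  proof (rule inj_onI)
    fix c d assume c: "c \<in> eigenvalues S" and d: "d \<in> eigenvalues S" and "e c = e d"
    then have "c *\<^sub>R e c = d *\<^sub>R e c"
      using e[OF c] e[OF d] by metis
    then have "(c - d) *\<^sub>R e c = 0"
      by (simp add: scaleR_diff_left)
    then show "c = d" using e[OF c] by simp
  qed
  \<comment> \<open>eigenvectors for distinct eigenvalues are orthogonal, hence linearly independent\<close>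
  have "pairwise orthogonal (e ` eigenvalues S)"
  proof (clarsimp simp: pairwise_def)
    fix c d assume c: "c \<in> eigenvalues S" and d: "d \<in> eigenvalues S" and "e c \<noteq> e d"
    then have "c \<noteq> d" by auto
    have "c * (e c \<bullet> e d) = e d \<bullet> (S *v e c)" using e[OF c] by (simp add: inner_commute)
    also have "\<dots> = d * (e c \<bullet> e d)"
      using e[OF d] inner_matrix_vector_mult_symmetric[OF sym] by simp
    finally show "orthogonal (e c) (e d)"
      using \<open>c \<noteq> d\<close> by (simp add: orthogonal_def)
  qed
  moreover have "0 \<notin> e ` eigenvalues S" using e by force
  ultimately have "finite (e ` eigenvalues S)"
    by (intro finiteI_independent pairwise_orthogonal_independent)
  then show ?thesis using inj finite_imageD by blast
qed

lemma psd_quadratic_form_eq_0_imp_kernel: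
  fixes R :: "real^'n^'n"
  assumes sym: "transpose R = R" and psd: "\<And>w. 0 \<le> w \<bullet> (R *v w)"
    and "v \<bullet> (R *v v) = 0"
  shows "R *v v = 0"
proof (rule ccontr)
  assume "R *v v \<noteq> 0"
  define z where "z = R *v v"
  define a where "a = z \<bullet> z"
  define b where "b = z \<bullet> (R *v z)"
  have a: "a > 0" using \<open>R *v v \<noteq> 0\<close> by (simp add: a_def z_def)
  have b: "b \<ge> 0" using psd by (simp add: b_def)
  \<comment> \<open>moving from v along -z makes the form negative to first order\<close>
  define t where "t = - a / (b + 1)"
  have "R *v (v + t *\<^sub>R z) = z + t *\<^sub>R (R *v z)"
    by (simp add: z_def matrix_vector_right_distrib matrix_vector_mult_scaleR)
  moreover have "v \<bullet> (R *v z) = a" "v \<bullet> z = 0"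
    using assms(3) inner_matrix_vector_mult_symmetric[OF sym, of v z] by (simp_all add: a_def z_def)
  ultimately have "(v + t *\<^sub>R z) \<bullet> (R *v (v + t *\<^sub>R z)) = t * (2 * a + t * b)"
    by (simp add: a_def b_def algebra_simps)
  also have "\<dots> < 0"
  proof (rule mult_neg_pos)
    show "t < 0" using a b by (simp add: t_def)
    have "b / (b + 1) < 2" using b by (simp add: field_simps)
    then have "a * (b / (b + 1)) < a * 2" using a by (intro mult_strict_left_mono)
    then show "0 < 2 * a + t * b" by (simp add: t_def)
  qed
  finally show False using psd[of "v + t *\<^sub>R z"] by linarith
qed

lemma eigenvalue_le_quadratic_form:
  fixes S :: "real^'n^'n"
  assumes sym: "transpose S = S"
  obtains \<mu> where "\<mu> \<in> eigenvalues S" and "\<And>w. \<mu> * (norm w)\<^sup>2 \<le> w \<bullet> (S *v w)"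
proof -
  define q where "q w = w \<bullet> (S *v w)" for w
  have "continuous_on (sphere 0 1) q"
    unfolding q_def by (intro continuous_intros matrix_vector_mult_linear_continuous_on)
  moreover have "sphere (0::real^'n) 1 \<noteq> {}" by (simp add: sphere_eq_empty)
  ultimately obtain v where v: "v \<in> sphere 0 1" and min: "\<And>y. y \<in> sphere 0 1 \<Longrightarrow> q v \<le> q y"
    using continuous_attains_inf[OF compact_sphere] by blast
  define \<mu> where "\<mu> = q v"
  have quad: "\<mu> * (norm w)\<^sup>2 \<le> q w" for w
  proof (cases "w = 0")
    case False
    then have "\<mu> \<le> q ((1 / norm w) *\<^sub>R w)" by (intro min[unfolded \<mu>_def[symmetric]]) simp
    also have "\<dots> = q w / (norm w)\<^sup>2"
      by (simp add: q_def matrix_vector_mult_scaleR power2_eq_square)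
    finally show ?thesis using False by (simp add: field_simps)
  qed (simp add: q_def)
  \<comment> \<open>the minimiser of the Rayleigh quotient is an eigenvector\<close>
  define R where "R = S - \<mu> *\<^sub>R mat 1"
  have R: "R *v w = S *v w - \<mu> *\<^sub>R w" for w
    by (simp add: R_def matrix_vector_mult_diff_rdistrib scaleR_matrix_vector_assoc[symmetric])
  have "R *v v = 0"
  proof (rule psd_quadratic_form_eq_0_imp_kernel)
    show "transpose R = R" using sym by (simp add: R_def transpose_diff transpose_scalar)
    show "0 \<le> w \<bullet> (R *v w)" for w
      using quad[of w] by (simp add: R q_def inner_diff_right power2_norm_eq_inner)
    show "v \<bullet> (R *v v) = 0"
      using v by (simp add: R \<mu>_def q_def inner_diff_right dot_square_norm)
  qed
  moreover have "v \<noteq> 0" using v by auto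
  ultimately have "\<mu> \<in> eigenvalues S"
    unfolding eigenvalues_def by (auto simp: R)
  with quad show thesis by (intro that) (simp_all add: q_def)
qed

lemma lambda_min_le_quadratic_form:
  fixes S :: "real^'n^'n"
  assumes "transpose S = S"
  shows "lambda_min S * (norm v)\<^sup>2 \<le> v \<bullet> (S *v v)"
proof -
  obtain \<mu> where "\<mu> \<in> eigenvalues S" and quad: "\<And>w. \<mu> * (norm w)\<^sup>2 \<le> w \<bullet> (S *v w)"
    using eigenvalue_le_quadratic_form[OF assms] by blast
  then have "lambda_min S \<le> \<mu>"
    unfolding lambda_min_def by (intro Min_le finite_eigenvalues_symmetric assms)
  then show ?thesis
    using quad[of v] mult_right_mono[of "lambda_min S" \<mu> "(norm v)\<^sup>2"] by simp
qed

lemma lambda_min_le_norm: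
  fixes S :: "real^'n^'n"
  assumes "transpose S = S"
  shows "lambda_min S \<le> norm S"
proof -
  define v :: "real^'n" where "v = axis undefined 1"
  have "lambda_min S * (norm v)\<^sup>2 \<le> v \<bullet> (S *v v)"
    by (rule lambda_min_le_quadratic_form[OF assms])
  also have "\<dots> \<le> norm S * (norm v)\<^sup>2"
    using abs_inner_matrix_vector_mult_le[of v S] by simp
  finally show ?thesis by (simp add: v_def)
qed

section \<open>Regularised inverses and the spectral norm\<close>

lemma quadratic_form_regularized_ge:
  fixes Sig S :: "real^'n^'n"
  assumes sym: "transpose Sig = Sig" and "a \<ge> 0"
    and close: "norm (S - Sig) \<le> lambda_min Sig / 2"
  shows "(1 + a * (lambda_min Sig / 2)) * (norm v)\<^sup>2 \<le> v \<bullet> ((a *\<^sub>R S + mat 1) *v v)"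
proof -
  have "lambda_min Sig * (norm v)\<^sup>2 - norm (S - Sig) * (norm v)\<^sup>2 \<le> v \<bullet> (S *v v)"
    using lambda_min_le_quadratic_form[OF sym, of v] abs_inner_matrix_vector_mult_le[of v "S - Sig"]
    by (simp add: matrix_vector_mult_diff_rdistrib inner_diff_right)
  moreover have "norm (S - Sig) * (norm v)\<^sup>2 \<le> lambda_min Sig / 2 * (norm v)\<^sup>2"
    using close by (intro mult_right_mono) auto
  ultimately have "lambda_min Sig / 2 * (norm v)\<^sup>2 \<le> v \<bullet> (S *v v)"
    by linarith
  then have "a * (lambda_min Sig / 2 * (norm v)\<^sup>2) \<le> a * (v \<bullet> (S *v v))"
    using \<open>a \<ge> 0\<close> by (rule mult_left_mono)
  moreover have "v \<bullet> ((a *\<^sub>R S + mat 1) *v v) = a * (v \<bullet> (S *v v)) + (norm v)\<^sup>2"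
    by (simp add: matrix_vector_mult_add_rdistrib scaleR_matrix_vector_assoc[symmetric]
        power2_norm_eq_inner inner_add_right)
  ultimately show ?thesis by (simp add: algebra_simps)
qed

lemma norm_regularized_inverse_diff_le:
  fixes Sig S1 S2 :: "real^'n^'n"
  assumes sym: "transpose Sig = Sig" and a: "a \<ge> 0"
    and close1: "norm (S1 - Sig) \<le> t" and close2: "norm (S2 - Sig) \<le> t"
    and t: "t \<le> lambda_min Sig / 2"
  defines "c \<equiv> 1 + a * (lambda_min Sig / 2)"
  shows "norm (matrix_inv (a *\<^sub>R S2 + mat 1) *v w - matrix_inv (a *\<^sub>R S1 + mat 1) *v w)
           \<le> 2 * a * t / c\<^sup>2 * norm w"
proof -
  define A1 A2 where "A1 = a *\<^sub>R S1 + mat 1" and "A2 = a *\<^sub>R S2 + mat 1"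
  have "0 \<le> t" using close1 norm_ge_zero order_trans by blast
  then have c: "c \<ge> 1" using a t by (simp add: c_def)
  have coercive1: "c * (norm v)\<^sup>2 \<le> v \<bullet> (A1 *v v)"
   and coercive2: "c * (norm v)\<^sup>2 \<le> v \<bullet> (A2 *v v)" for v
    unfolding c_def A1_def A2_def using close1 close2 t
    by (intro quadratic_form_regularized_ge[OF sym a]; linarith)+
  have "norm (A1 - A2) = a * norm ((S1 - Sig) - (S2 - Sig))"
    using a by (simp add: A1_def A2_def algebra_simps flip: scaleR_diff_right)
  also have "\<dots> \<le> a * (2 * t)"
    using a close1 close2 norm_triangle_ineq4[of "S1 - Sig" "S2 - Sig"] by (intro mult_left_mono) auto
  finally have diff: "norm (A1 - A2) \<le> 2 * a * t" by simp
  have "invertible A1" "invertible A2"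
    using c coercive_imp_invertible[of c, OF _ coercive1] coercive_imp_invertible[of c, OF _ coercive2]
    by simp_all
  then have "norm (matrix_inv A2 *v w - matrix_inv A1 *v w)
      = norm (matrix_inv A2 *v ((A1 - A2) *v (matrix_inv A1 *v w)))"
    by (simp add: matrix_inv_diff_vector)
  also have "\<dots> \<le> norm ((A1 - A2) *v (matrix_inv A1 *v w)) / c"
    using c coercive2 by (intro norm_matrix_inv_vector_le_coercive) auto
  also have "\<dots> \<le> 2 * a * t * (norm w / c) / c"
  proof (rule divide_right_mono)
    have "norm ((A1 - A2) *v (matrix_inv A1 *v w)) \<le> norm (A1 - A2) * norm (matrix_inv A1 *v w)"
      by (rule norm_matrix_vector_mult_le)
    also have "\<dots> \<le> 2 * a * t * (norm w / c)"
      using diff \<open>0 \<le> t\<close> a c coercive1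
      by (intro mult_mono norm_matrix_inv_vector_le_coercive) auto
    finally show "norm ((A1 - A2) *v (matrix_inv A1 *v w)) \<le> 2 * a * t * (norm w / c)" .
  qed (use c in auto)
  finally show ?thesis
    unfolding A1_def A2_def by (simp add: power2_eq_square)
qed

lemma norm_sum_scaleR_le_sqrt_card:
  fixes phi :: "nat \<Rightarrow> 'a::real_normed_vector"
  assumes v: "(\<Sum>j<n. (v j)\<^sup>2) \<le> 1" and K: "\<And>j. j < n \<Longrightarrow> norm (phi j) \<le> K"
  shows "norm (\<Sum>j<n. v j *\<^sub>R phi j) \<le> K * sqrt n"
proof (cases "n = 0")
  case False
  then have "K \<ge> 0" using K[of 0] norm_ge_zero order_trans by blast
  have "norm (\<Sum>j<n. v j *\<^sub>R phi j) \<le> (\<Sum>j<n. \<bar>v j\<bar> * K)"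
    using K by (intro order_trans[OF norm_sum] sum_mono) (simp add: mult_left_mono)
  also have "\<dots> = K * (\<Sum>j<n. \<bar>v j\<bar>)" by (simp add: sum_distrib_left mult.commute)
  also have "(\<Sum>j<n. \<bar>v j\<bar>) \<le> sqrt n"
  proof -
    have "(\<Sum>j<n. \<bar>v j\<bar>)\<^sup>2 \<le> (\<Sum>j<n. \<bar>v j\<bar>\<^sup>2) * real (card {..<n})"
      by (rule sum_squared_le_sum_of_squares)
    also have "\<dots> \<le> real n" using v mult_right_mono[OF v, of "real n"] by simp
    finally show ?thesis by (simp add: real_le_rsqrt)
  qed
  finally show ?thesis using \<open>K \<ge> 0\<close> by (simp add: mult_left_mono order_trans)
qed simp

lemma spec_norm_gram_le:
  fixes D :: "real^'n^'n" and phi :: "nat \<Rightarrow> real^'n"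
  assumes D: "\<And>w. norm (D *v w) \<le> d * norm w" and K: "\<And>i. i < n \<Longrightarrow> norm (phi i) \<le> K"
  shows "spec_norm n (\<lambda>i j. phi i \<bullet> (D *v phi j)) \<le> real n * K\<^sup>2 * d"
  unfolding spec_norm_def
proof (rule cSUP_least)
  show "{v :: nat \<Rightarrow> real. (\<Sum>j<n. (v j)\<^sup>2) \<le> 1} \<noteq> {}"
    by (rule ex_in_conv[THEN iffD1], rule exI[of _ "\<lambda>_. 0::real"]) simp
next
  fix v :: "nat \<Rightarrow> real" assume "v \<in> {v. (\<Sum>j<n. (v j)\<^sup>2) \<le> 1}"
  then have u: "norm (\<Sum>j<n. v j *\<^sub>R phi j) \<le> K * sqrt n"
    using K by (intro norm_sum_scaleR_le_sqrt_card) auto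
  have "norm (D *v axis undefined 1) \<le> d"
    using D[of "axis undefined 1"] by simp
  then have "0 \<le> d" using norm_ge_zero[of "D *v axis undefined 1"] by linarith
  have row: "\<bar>\<Sum>j<n. phi i \<bullet> (D *v phi j) * v j\<bar> \<le> K * (d * (K * sqrt n))" if "i < n" for i
  proof -
    have "(\<Sum>j<n. phi i \<bullet> (D *v phi j) * v j) = phi i \<bullet> (D *v (\<Sum>j<n. v j *\<^sub>R phi j))"
      by (simp add: vec.sum inner_sum_right matrix_vector_mult_scaleR mult.commute)
    also have "\<bar>\<dots>\<bar> \<le> norm (phi i) * norm (D *v (\<Sum>j<n. v j *\<^sub>R phi j))"
      by (rule Cauchy_Schwarz_ineq2)
    also have "\<dots> \<le> K * (d * (K * sqrt n))"
      using K[OF that] D u \<open>0 \<le> d\<close> order_trans[OF norm_ge_zero K[OF that]]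
      by (intro mult_mono order_trans[OF D] mult_left_mono) auto
    finally show ?thesis .
  qed
  have "(\<Sum>i<n. (\<Sum>j<n. phi i \<bullet> (D *v phi j) * v j)\<^sup>2) \<le> (\<Sum>i<n. (K * (d * (K * sqrt n)))\<^sup>2)"
    using power_mono[OF row abs_ge_zero, of _ 2] by (intro sum_mono) simp
  also have "\<dots> = (real n * K\<^sup>2 * d)\<^sup>2"
    by (simp add: power_mult_distrib power2_eq_square)
  finally show "sqrt (\<Sum>i<n. (\<Sum>j<n. phi i \<bullet> (D *v phi j) * v j)\<^sup>2) \<le> real n * K\<^sup>2 * d"
    using \<open>0 \<le> d\<close> by (intro real_le_lsqrt) auto
qed

lemma spec_norm_S_mat_diff_le:
  fixes Sig S1 S2 :: "real^'r^'r" and phi :: "'d \<Rightarrow> real^'r"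
  assumes "transpose Sig = Sig" and "a \<ge> 0"
    and "norm (S1 - Sig) \<le> t" and "norm (S2 - Sig) \<le> t" and "t \<le> lambda_min Sig / 2"
    and K: "\<And>x. norm (phi x) \<le> K"
  shows "spec_norm n (\<lambda>i j. S_mat phi (a *\<^sub>R S2 + mat 1) xt i j - S_mat phi (a *\<^sub>R S1 + mat 1) xt i j)
           \<le> real n * K\<^sup>2 * (2 * a * t / (1 + a * (lambda_min Sig / 2))\<^sup>2)"
proof -
  define D where "D = matrix_inv (a *\<^sub>R S2 + mat 1) - matrix_inv (a *\<^sub>R S1 + mat 1)"
  have "spec_norm n (\<lambda>i j. phi (xt i) \<bullet> (D *v phi (xt j)))
          \<le> real n * K\<^sup>2 * (2 * a * t / (1 + a * (lambda_min Sig / 2))\<^sup>2)"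
    using norm_regularized_inverse_diff_le[OF assms(1-5)] K
    by (intro spec_norm_gram_le) (simp_all add: D_def matrix_vector_mult_diff_rdistrib)
  then show ?thesis
    by (simp add: S_mat_def D_def matrix_vector_mult_diff_rdistrib inner_diff_right)
qed

lemma spec_norm_S_mat_posterior_diff_le:
  fixes Sig S1 S2 :: "real^'r^'r" and phi :: "'d \<Rightarrow> real^'r" and \<sigma> :: real
  assumes "transpose Sig = Sig" "0 < \<sigma>" "0 < N" "0 < lambda_min Sig"
    and "norm (S1 - Sig) \<le> 2 * K\<^sup>2 * X" "norm (S2 - Sig) \<le> 2 * K\<^sup>2 * X"
    and "2 * K\<^sup>2 * X \<le> lambda_min Sig / 2" "\<And>x. norm (phi x) \<le> K"
  shows "spec_norm n (\<lambda>i j. S_mat phi ((real N / \<sigma>\<^sup>2) *\<^sub>R S2 + mat 1) xt i j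
                           - S_mat phi ((real N / \<sigma>\<^sup>2) *\<^sub>R S1 + mat 1) xt i j)
           \<le> real n * (4 * K ^ 4 / (\<sigma> / real N + lambda_min Sig / (2 * \<sigma>))\<^sup>2) * (1 / real N) * X"
proof -
  let ?lam = "lambda_min Sig"
  have "1 + real N / \<sigma>\<^sup>2 * (?lam / 2) = real N / \<sigma> * (\<sigma> / real N + ?lam / (2 * \<sigma>))"
    using assms(2,3) by (simp add: field_simps power2_eq_square)
  moreover have "0 < \<sigma> / real N + ?lam / (2 * \<sigma>)" using assms(2-4) by (simp add: add_pos_pos)
  ultimately have eq: "real n * K\<^sup>2 * (2 * (real N / \<sigma>\<^sup>2) * (2 * K\<^sup>2 * X) / (1 + real N / \<sigma>\<^sup>2 * (?lam / 2))\<^sup>2)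
      = real n * (4 * K ^ 4 / (\<sigma> / real N + ?lam / (2 * \<sigma>))\<^sup>2) * (1 / real N) * X"
    using assms(2,3) by (simp add: field_simps power2_eq_square) (simp add: power4_eq_xxxx)
  have "0 \<le> real N / \<sigma>\<^sup>2" by simp
  from spec_norm_S_mat_diff_le[OF assms(1) this assms(5-8), where n=n and xt=xt]
  show ?thesis by (simp only: eq)
qed

section \<open>McDiarmid's inequality\<close>

definition bounded_differences :: "'a measure \<Rightarrow> 'i set \<Rightarrow> (('i \<Rightarrow> 'a) \<Rightarrow> real) \<Rightarrow> real \<Rightarrow> bool" where
  "bounded_differences M I f c \<longleftrightarrow>
     (\<forall>x \<in> space (PiM I (\<lambda>_. M)). \<forall>i \<in> I. \<forall>y \<in> space M. \<bar>f x - f (x(i := y))\<bar> \<le> c)"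

lemma measurable_section_fun_upd:
  assumes "f \<in> borel_measurable (PiM (insert j I) (\<lambda>_. M))" and "j \<notin> I"
    and "x \<in> space (PiM I (\<lambda>_. M))"
  shows "(\<lambda>y. f (x(j := y))) \<in> borel_measurable M"
  using measurable_comp[OF measurable_component_update assms(1), OF assms(3,2)]
  by (simp add: comp_def fun_upd_def)

context prob_space
begin

lemma integrable_bounded:
  fixes f :: "'a \<Rightarrow> real"
  assumes "f \<in> borel_measurable M" and "\<And>x. x \<in> space M \<Longrightarrow> \<bar>f x\<bar> \<le> B"
  shows "integrable M f"
  using assms by (intro integrable_const_bound[where B=B]) auto

lemma abs_integral_le_bound:
  fixes f :: "'a \<Rightarrow> real"
  assumes "f \<in> borel_measurable M" and "\<And>x. x \<in> space M \<Longrightarrow> \<bar>f x\<bar> \<le> B"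
  shows "\<bar>integral\<^sup>L M f\<bar> \<le> B"
proof -
  have "\<bar>integral\<^sup>L M f\<bar> \<le> integral\<^sup>L M (\<lambda>x. \<bar>f x\<bar>)" by (rule integral_abs_bound)
  also have "\<dots> \<le> B"
    using assms by (intro integral_le_const integrable_abs integrable_bounded) auto
  finally show ?thesis .
qed

lemma abs_diff_expectation_le:
  fixes h :: "'a \<Rightarrow> real"
  assumes [measurable]: "h \<in> borel_measurable M"
    and osc: "\<And>y y'. y \<in> space M \<Longrightarrow> y' \<in> space M \<Longrightarrow> \<bar>h y - h y'\<bar> \<le> c"
    and y: "y \<in> space M"
  shows "\<bar>h y - expectation h\<bar> \<le> c"
proof -
  have "integrable M h"
  proof (rule integrable_bounded[where B="\<bar>h y\<bar> + c"])
    show "\<bar>h y'\<bar> \<le> \<bar>h y\<bar> + c" if "y' \<in> space M" for y'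
      using osc[OF y that] by linarith
  qed simp
  then have "h y - expectation h = expectation (\<lambda>y'. h y - h y')"
    by (simp add: prob_space)
  also have "\<bar>\<dots>\<bar> \<le> c"
    using osc y by (intro abs_integral_le_bound) auto
  finally show ?thesis .
qed

lemma nn_integral_exp_centered_le:
  fixes h :: "'a \<Rightarrow> real"
  assumes [measurable]: "h \<in> borel_measurable M"
    and osc: "\<And>y y'. y \<in> space M \<Longrightarrow> y' \<in> space M \<Longrightarrow> \<bar>h y - h y'\<bar> \<le> c" and "l > 0"
  shows "(\<integral>\<^sup>+y. ennreal (exp (l * (h y - expectation h))) \<partial>M) \<le> ennreal (exp (l\<^sup>2 * (2 * c)\<^sup>2 / 8))"
proof -
  \<comment> \<open>h takes values in an interval of length 2c around its mean\<close>
  interpret interval_bounded_random_variable M h "expectation h - c" "expectation h + c"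
    using abs_diff_expectation_le[OF assms(1) osc]
    by unfold_locales (auto intro!: AE_I2 simp: abs_diff_le_iff)
  show ?thesis using Hoeffdings_lemma_nn_integral[OF \<open>l > 0\<close>] by simp
qed

lemma bounded_differences_section_integral:
  fixes f :: "('i \<Rightarrow> 'a) \<Rightarrow> real"
  assumes "j \<notin> I"
    and f: "f \<in> borel_measurable (PiM (insert j I) (\<lambda>_. M))"
    and bnd: "\<forall>x \<in> space (PiM (insert j I) (\<lambda>_. M)). \<bar>f x\<bar> \<le> B"
    and diff: "bounded_differences M (insert j I) f c"
  defines "g \<equiv> \<lambda>x. \<integral>y. f (x(j := y)) \<partial>M"
  shows "g \<in> borel_measurable (PiM I (\<lambda>_. M))"
    and "\<forall>x \<in> space (PiM I (\<lambda>_. M)). \<bar>g x\<bar> \<le> B"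
    and "bounded_differences M I g c"
proof -
  let ?P = "PiM I (\<lambda>_. M)"
  have upd: "x(j := y) \<in> space (PiM (insert j I) (\<lambda>_. M))" if "x \<in> space ?P" "y \<in> space M" for x y
    using that by (auto simp: space_PiM PiE_def extensional_def)
  note sec[measurable] = measurable_section_fun_upd[OF f \<open>j \<notin> I\<close>]
  have int_sec: "integrable M (\<lambda>y. f (x(j := y)))" if "x \<in> space ?P" for x
    using that upd bnd by (intro integrable_bounded[where B=B] sec) auto
  have "(\<lambda>(x, y). f (x(j := y))) \<in> borel_measurable (?P \<Otimes>\<^sub>M M)"
    using measurable_comp[OF measurable_add_dim[of j I "\<lambda>_. M"] f] by (simp add: comp_def split_beta')
  then show "g \<in> borel_measurable ?P"
    unfolding g_def by (rule borel_measurable_lebesgue_integral)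
  show "\<forall>x \<in> space ?P. \<bar>g x\<bar> \<le> B"
    unfolding g_def using upd bnd by (intro ballI abs_integral_le_bound sec) auto
  have diff_upd: "\<bar>f (x(j := y)) - f ((x(j := y))(i := z))\<bar> \<le> c"
    if "x \<in> space ?P" "y \<in> space M" "i \<in> insert j I" "z \<in> space M" for x y i z
    using diff upd that unfolding bounded_differences_def by blast
  show "bounded_differences M I g c"
    unfolding bounded_differences_def
  proof (intro ballI)
    fix x i z assume x: "x \<in> space ?P" and i: "i \<in> I" and z: "z \<in> space M"
    have xz: "x(i := z) \<in> space ?P" using x z i by (auto simp: space_PiM PiE_def extensional_def)
    have "i \<noteq> j" using i \<open>j \<notin> I\<close> by auto
    then have twist: "(x(i := z))(j := y) = (x(j := y))(i := z)" for y
      by (rule fun_upd_twist)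
    have "g x - g (x(i := z)) = (\<integral>y. f (x(j := y)) - f ((x(j := y))(i := z)) \<partial>M)"
      unfolding g_def using int_sec[OF x] int_sec[OF xz]
      by (subst Bochner_Integration.integral_diff) (auto simp: twist)
    also have "\<bar>\<dots>\<bar> \<le> c"
      using x xz i z diff_upd sec[OF xz]
      by (intro abs_integral_le_bound) (auto simp: twist)
    finally show "\<bar>g x - g (x(i := z))\<bar> \<le> c" .
  qed
qed

lemma nn_integral_exp_insert_le:
  fixes f :: "('i \<Rightarrow> 'a) \<Rightarrow> real"
  assumes "finite I" "j \<notin> I" and f[measurable]: "f \<in> borel_measurable (PiM (insert j I) (\<lambda>_. M))"
    and bnd: "\<forall>x \<in> space (PiM (insert j I) (\<lambda>_. M)). \<bar>f x\<bar> \<le> B"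
    and diff: "bounded_differences M (insert j I) f c" and "l > 0"
  defines "g \<equiv> \<lambda>x. \<integral>y. f (x(j := y)) \<partial>M"
  shows "(\<integral>\<^sup>+x. ennreal (exp (l * (f x - integral\<^sup>L (PiM (insert j I) (\<lambda>_. M)) f))) \<partial>PiM (insert j I) (\<lambda>_. M))
      \<le> (\<integral>\<^sup>+x. ennreal (exp (l * (g x - integral\<^sup>L (PiM I (\<lambda>_. M)) g))) \<partial>PiM I (\<lambda>_. M))
          * ennreal (exp (l\<^sup>2 * (2 * c)\<^sup>2 / 8))"
proof -
  interpret PP: product_prob_space "\<lambda>_. M" by unfold_locales
  let ?P = "PiM I (\<lambda>_. M)" and ?Q = "PiM (insert j I) (\<lambda>_. M)"
  interpret Q: prob_space ?Q by (rule prob_space_PiM) (rule prob_space_axioms)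
  define C where "C = exp (l\<^sup>2 * (2 * c)\<^sup>2 / 8)"
  note [measurable] = bounded_differences_section_integral(1)[OF assms(2) f bnd diff, folded g_def]
  have "integrable ?Q f" using bnd by (intro Q.integrable_bounded[OF f]) auto
  then have "integral\<^sup>L ?Q f = integral\<^sup>L ?P g"
    unfolding g_def by (rule PP.product_integral_insert[OF assms(1,2)])
  have osc: "\<bar>f (x(j := y)) - f (x(j := y'))\<bar> \<le> c"
    if "x \<in> space ?P" "y \<in> space M" "y' \<in> space M" for x y y'
    using diff that unfolding bounded_differences_def
    by (metis (no_types, lifting) fun_upd_upd insertI1 measurable_component_update
        measurable_space assms(2))
  \<comment> \<open>Hoeffding's lemma for the new coordinate, the others being fixed\<close>
  have step: "(\<integral>\<^sup>+y. ennreal (exp (l * (f (x(j := y)) - integral\<^sup>L ?Q f))) \<partial>M)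
      \<le> ennreal (exp (l * (g x - integral\<^sup>L ?P g))) * ennreal C"
    if x: "x \<in> space ?P" for x
  proof -
    note [measurable] = measurable_section_fun_upd[OF f assms(2) x]
    have "(\<integral>\<^sup>+y. ennreal (exp (l * (f (x(j := y)) - integral\<^sup>L ?Q f))) \<partial>M)
        = ennreal (exp (l * (g x - integral\<^sup>L ?P g))) * (\<integral>\<^sup>+y. ennreal (exp (l * (f (x(j := y)) - g x))) \<partial>M)"
      by (subst nn_integral_cmult[symmetric]) (auto intro!: nn_integral_cong
          simp: \<open>integral\<^sup>L ?Q f = integral\<^sup>L ?P g\<close> ennreal_mult'[symmetric] exp_add[symmetric] algebra_simps)
    also have "\<dots> \<le> ennreal (exp (l * (g x - integral\<^sup>L ?P g))) * ennreal C"
      unfolding g_def C_def using osc[OF x] \<open>l > 0\<close>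
      by (intro mult_left_mono nn_integral_exp_centered_le) auto
    finally show ?thesis .
  qed
  have "(\<integral>\<^sup>+x. ennreal (exp (l * (f x - integral\<^sup>L ?Q f))) \<partial>?Q)
      = (\<integral>\<^sup>+x. (\<integral>\<^sup>+y. ennreal (exp (l * (f (x(j := y)) - integral\<^sup>L ?Q f))) \<partial>M) \<partial>?P)"
    by (rule PP.product_nn_integral_insert[OF assms(1,2)]) measurable
  also have "\<dots> \<le> (\<integral>\<^sup>+x. ennreal (exp (l * (g x - integral\<^sup>L ?P g))) * ennreal C \<partial>?P)"
    by (intro nn_integral_mono step)
  also have "\<dots> = (\<integral>\<^sup>+x. ennreal (exp (l * (g x - integral\<^sup>L ?P g))) \<partial>?P) * ennreal C"
    by (rule nn_integral_multc) measurable
  finally show ?thesis by (simp add: C_def)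
qed

lemma mcdiarmid_mgf_le:
  fixes f :: "('i \<Rightarrow> 'a) \<Rightarrow> real"
  assumes "finite I" and "f \<in> borel_measurable (PiM I (\<lambda>_. M))"
    and "\<forall>x \<in> space (PiM I (\<lambda>_. M)). \<bar>f x\<bar> \<le> B"
    and "bounded_differences M I f c" and "l > 0"
  shows "(\<integral>\<^sup>+x. ennreal (exp (l * (f x - integral\<^sup>L (PiM I (\<lambda>_. M)) f))) \<partial>PiM I (\<lambda>_. M))
           \<le> ennreal (exp (l\<^sup>2 * real (card I) * (2 * c)\<^sup>2 / 8))"
  using assms(1-4)
proof (induction I arbitrary: f B rule: finite_induct)
  case empty
  interpret P: prob_space "PiM ({}::'i set) (\<lambda>_. M)" by (rule prob_space_PiM) (rule prob_space_axioms)
  have space: "space (PiM ({}::'i set) (\<lambda>_. M)) = {\<lambda>_. undefined}" by (simp add: PiM_empty)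
  have "integral\<^sup>L (PiM ({}::'i set) (\<lambda>_. M)) f = integral\<^sup>L (PiM ({}::'i set) (\<lambda>_. M)) (\<lambda>_. f (\<lambda>_. undefined))"
    by (rule Bochner_Integration.integral_cong) (auto simp: space)
  then have "integral\<^sup>L (PiM ({}::'i set) (\<lambda>_. M)) f = f (\<lambda>_. undefined)"
    by (simp add: P.prob_space)
  then have "(\<integral>\<^sup>+x. ennreal (exp (l * (f x - integral\<^sup>L (PiM ({}::'i set) (\<lambda>_. M)) f))) \<partial>PiM ({}::'i set) (\<lambda>_. M))
        = (\<integral>\<^sup>+x. 1 \<partial>PiM ({}::'i set) (\<lambda>_. M))"
    by (intro nn_integral_cong) (simp add: space)
  then show ?case by (simp add: P.emeasure_space_1)
next
  case (insert j I)
  define g where "g x = (\<integral>y. f (x(j := y)) \<partial>M)" for x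
  note g = bounded_differences_section_integral[OF insert.hyps(2) insert.prems, folded g_def]
  have "(\<integral>\<^sup>+x. ennreal (exp (l * (f x - integral\<^sup>L (PiM (insert j I) (\<lambda>_. M)) f))) \<partial>PiM (insert j I) (\<lambda>_. M))
      \<le> (\<integral>\<^sup>+x. ennreal (exp (l * (g x - integral\<^sup>L (PiM I (\<lambda>_. M)) g))) \<partial>PiM I (\<lambda>_. M))
          * ennreal (exp (l\<^sup>2 * (2 * c)\<^sup>2 / 8))"
    unfolding g_def by (rule nn_integral_exp_insert_le[OF insert.hyps insert.prems \<open>l > 0\<close>])
  also have "\<dots> \<le> ennreal (exp (l\<^sup>2 * real (card I) * (2 * c)\<^sup>2 / 8)) * ennreal (exp (l\<^sup>2 * (2 * c)\<^sup>2 / 8))"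
    using g by (intro mult_right_mono insert.IH) auto
  also have "\<dots> = ennreal (exp (l\<^sup>2 * real (card (insert j I)) * (2 * c)\<^sup>2 / 8))"
    using insert.hyps
    by (simp add: ennreal_mult'[symmetric] exp_add[symmetric] algebra_simps add_divide_distrib)
  finally show ?case .
qed

lemma mcdiarmid_inequality:
  fixes f :: "('i \<Rightarrow> 'a) \<Rightarrow> real"
  assumes I: "finite I" "I \<noteq> {}" and f[measurable]: "f \<in> borel_measurable (PiM I (\<lambda>_. M))"
    and bnd: "\<forall>x \<in> space (PiM I (\<lambda>_. M)). \<bar>f x\<bar> \<le> B"
    and diff: "bounded_differences M I f c" and "c > 0" and "u > 0"
  shows "emeasure (PiM I (\<lambda>_. M)) {x \<in> space (PiM I (\<lambda>_. M)). f x - integral\<^sup>L (PiM I (\<lambda>_. M)) f \<ge> u}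
           \<le> ennreal (exp (- u\<^sup>2 / (2 * real (card I) * c\<^sup>2)))"
proof -
  let ?P = "PiM I (\<lambda>_. M)"
  define E where "E = integral\<^sup>L ?P f"
  define n where "n = real (card I)"
  have n: "n > 0" using I by (simp add: n_def card_gt_0_iff)
  \<comment> \<open>the Chernoff parameter optimising the exponential moment bound\<close>
  define l where "l = u / (n * c\<^sup>2)"
  have l: "l > 0" using n \<open>c > 0\<close> \<open>u > 0\<close> by (simp add: l_def)
  let ?A = "{x \<in> space ?P. f x - E \<ge> u}"
  have "emeasure ?P ?A = (\<integral>\<^sup>+x. indicator ?A x \<partial>?P)" by simp
  also have "\<dots> \<le> (\<integral>\<^sup>+x. ennreal (exp (l * (f x - E))) * ennreal (exp (- l * u)) \<partial>?P)"
  proof (rule nn_integral_mono)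
    fix x assume "x \<in> space ?P"
    have "l * u \<le> l * (f x - E)" if "x \<in> ?A" using l that by (intro mult_left_mono) auto
    then show "indicator ?A x \<le> ennreal (exp (l * (f x - E))) * ennreal (exp (- l * u))"
      by (auto simp: indicator_def ennreal_mult'[symmetric] exp_add[symmetric])
  qed
  also have "\<dots> = (\<integral>\<^sup>+x. ennreal (exp (l * (f x - E))) \<partial>?P) * ennreal (exp (- l * u))"
    by (rule nn_integral_multc) measurable
  also have "\<dots> \<le> ennreal (exp (l\<^sup>2 * n * (2 * c)\<^sup>2 / 8)) * ennreal (exp (- l * u))"
    unfolding E_def n_def using I bnd diff l by (intro mult_right_mono mcdiarmid_mgf_le) auto
  also have "\<dots> = ennreal (exp (l\<^sup>2 * n * (2 * c)\<^sup>2 / 8 - l * u))"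
    by (simp add: ennreal_mult'[symmetric] exp_add[symmetric])
  also have "l\<^sup>2 * n * (2 * c)\<^sup>2 / 8 - l * u = - u\<^sup>2 / (2 * n * c\<^sup>2)"
    using n \<open>c > 0\<close> by (simp add: l_def power2_eq_square field_simps)
  finally show ?thesis by (simp add: E_def n_def)
qed

end

section \<open>Concentration of sample means\<close>

definition sample_mean :: "'i set \<Rightarrow> ('a \<Rightarrow> 'b::real_vector) \<Rightarrow> ('i \<Rightarrow> 'a) \<Rightarrow> 'b" where
  "sample_mean I Y x = (1 / real (card I)) *\<^sub>R (\<Sum>i\<in>I. Y (x i))"

lemma mean_diff_const:
  fixes f :: "nat \<Rightarrow> 'a::real_vector"
  assumes "0 < n"
  shows "(1 / real n) *\<^sub>R (\<Sum>i<n. f i) - c = (1 / real n) *\<^sub>R (\<Sum>i<n. f i - c)"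
  using assms by (simp add: sum_subtractf scaleR_diff_right sum_constant_scaleR del: sum_constant)

lemma norm_sample_mean_le:
  assumes "\<And>i. i \<in> I \<Longrightarrow> norm (Y (x i)) \<le> B" and "B \<ge> 0"
  shows "norm (sample_mean I Y x) \<le> B"
proof (cases "finite I \<and> I \<noteq> {}")
  case True
  have "norm (\<Sum>i\<in>I. Y (x i)) \<le> real (card I) * B"
    using sum_mono[of I "\<lambda>i. norm (Y (x i))" "\<lambda>_. B"] assms(1)
    by (intro order_trans[OF norm_sum]) simp
  then show ?thesis
    using True by (simp add: sample_mean_def card_gt_0_iff field_simps)
qed (use assms in \<open>auto simp: sample_mean_def\<close>)

lemma borel_measurable_sample_mean:
  fixes Y :: "'a \<Rightarrow> 'b::euclidean_space"
  assumes "I \<subseteq> J" and [measurable]: "Y \<in> borel_measurable M"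
  shows "(\<lambda>x. sample_mean I Y x) \<in> borel_measurable (PiM J (\<lambda>_. M))"
proof -
  have "(\<lambda>x. Y (x i)) \<in> borel_measurable (PiM J (\<lambda>_. M))" if "i \<in> I" for i
    using that assms(1) by (intro measurable_compose[OF measurable_component_singleton]) auto
  then show ?thesis
    unfolding sample_mean_def by (intro borel_measurable_scaleR borel_measurable_sum) auto
qed

lemma finite_inj_samples: "finite (inj_samples N k)"
  unfolding inj_samples_def by (rule finite_subset[OF _ finite_PiE[of "{..<k}" "\<lambda>_. {..<N}"]]) auto

lemma inj_samples_nonempty:
  assumes "k \<le> N"
  shows "inj_samples N k \<noteq> {}"
proof -
  have "restrict (\<lambda>i. i) {..<k} \<in> inj_samples N k"
    using assms by (auto simp: inj_samples_def inj_on_def)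
  then show ?thesis by blast
qed

lemma inj_samplesD:
  assumes "s \<in> inj_samples N k"
  shows "s ` {..<k} \<subseteq> {..<N}" and "card (s ` {..<k}) = k"
    and "sample_mean (s ` {..<k}) Y x = (1 / real k) *\<^sub>R (\<Sum>i<k. Y (x (s i)))"
  using assms by (auto simp: inj_samples_def sample_mean_def card_image sum.reindex)

lemma inner_outer: "outer a \<bullet> outer b = (a \<bullet> (b::real^'n))\<^sup>2"
proof -
  have "outer a \<bullet> outer b = (\<Sum>i\<in>UNIV. \<Sum>j\<in>UNIV. (a$i * b$i) * (a$j * b$j))"
    by (simp add: outer_def inner_vec_def algebra_simps)
  also have "\<dots> = (\<Sum>i\<in>UNIV. a$i * b$i) * (\<Sum>j\<in>UNIV. a$j * b$j)"
    by (simp add: sum_product)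
  finally show ?thesis by (simp add: inner_vec_def power2_eq_square)
qed

lemma norm_outer: "norm (outer (a::real^'n)) = (norm a)\<^sup>2"
  by (rule power2_eq_imp_eq) (simp_all add: power2_norm_eq_inner inner_outer)

lemma norm_outer_diff_le:
  assumes "norm (a::real^'n) \<le> K" "norm b \<le> K"
  shows "norm (outer a - outer b) \<le> sqrt 2 * K\<^sup>2"
proof -
  have "((norm v)\<^sup>2)\<^sup>2 \<le> (K\<^sup>2)\<^sup>2" if "norm v \<le> K" for v :: "real^'n"
    using that by (intro power_mono) (simp_all add: power_mono)
  then have "((norm a)\<^sup>2)\<^sup>2 \<le> (K\<^sup>2)\<^sup>2" "((norm b)\<^sup>2)\<^sup>2 \<le> (K\<^sup>2)\<^sup>2"
    using assms by blast+
  moreover have "(norm (outer a - outer b))\<^sup>2 = ((norm a)\<^sup>2)\<^sup>2 - 2 * (a \<bullet> b)\<^sup>2 + ((norm b)\<^sup>2)\<^sup>2"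
    by (simp add: power2_norm_eq_inner inner_diff_left inner_diff_right inner_outer inner_commute)
  moreover have "(sqrt 2 * K\<^sup>2)\<^sup>2 = (K\<^sup>2)\<^sup>2 + (K\<^sup>2)\<^sup>2" by (simp add: power_mult_distrib)
  ultimately have "(norm (outer a - outer b))\<^sup>2 \<le> (sqrt 2 * K\<^sup>2)\<^sup>2"
    using zero_le_power2[of "a \<bullet> b"] by linarith
  then show ?thesis by (rule power2_le_imp_le) simp
qed

lemma transpose_integral_outer:
  assumes "integrable M (\<lambda>x. outer (phi x))"
  shows "transpose (\<integral>x. outer (phi x) \<partial>M) = (\<integral>x. outer (phi x) \<partial>M)"
proof -
  have "(\<integral>x. outer (phi x) \<partial>M) $ i $ j = (\<integral>x. outer (phi x) $ i $ j \<partial>M)" for i j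
    using integral_bounded_linear[OF bounded_linear_compose[OF bounded_linear_vec_nth
        bounded_linear_vec_nth] assms] by simp
  then show ?thesis by (simp add: vec_eq_iff transpose_def outer_def mult.commute)
qed

lemma borel_measurable_outer[measurable]:
  fixes phi :: "'a \<Rightarrow> real^'n"
  assumes "phi \<in> borel_measurable M"
  shows "(\<lambda>x. outer (phi x)) \<in> borel_measurable M"
proof -
  have "continuous_on UNIV (outer :: real^'n \<Rightarrow> real^'n^'n)"
    unfolding outer_def by (intro continuous_intros)
  then show ?thesis
    by (rule measurable_compose[OF assms borel_measurable_continuous_onI])
qed

context prob_space
begin

lemma integral_norm_add_centered_sq:
  fixes Y :: "'a \<Rightarrow> 'b::euclidean_space"
  assumes [measurable]: "Y \<in> borel_measurable M" and Yb: "\<And>y. y \<in> space M \<Longrightarrow> norm (Y y) \<le> b"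
    and "integral\<^sup>L M Y = 0"
  shows "(\<integral>y. (norm (Y y + s))\<^sup>2 \<partial>M) = (\<integral>y. (norm (Y y))\<^sup>2 \<partial>M) + (norm s)\<^sup>2"
proof -
  have Yint: "integrable M Y"
    using Yb by (intro integrable_const_bound[where B=b]) auto
  have Y2int: "integrable M (\<lambda>y. (norm (Y y))\<^sup>2)"
    using Yb by (intro integrable_bounded[where B="b\<^sup>2"]) (auto simp: abs_le_square_iff power_mono)
  have "(\<integral>y. (norm (Y y + s))\<^sup>2 \<partial>M) = (\<integral>y. (norm (Y y))\<^sup>2 + (2 * (Y y \<bullet> s) + (norm s)\<^sup>2) \<partial>M)"
    by (simp add: power2_norm_eq_inner inner_add_left inner_add_right inner_commute algebra_simps)
  also have "\<dots> = (\<integral>y. (norm (Y y))\<^sup>2 \<partial>M) + (2 * (integral\<^sup>L M Y \<bullet> s) + (norm s)\<^sup>2)"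
    using Yint Y2int by (simp add: Bochner_Integration.integral_add prob_space)
  finally show ?thesis using assms(3) by simp
qed

lemma integrable_norm_sum_sq:
  fixes Y :: "'a \<Rightarrow> 'b::euclidean_space"
  assumes "finite J" and [measurable]: "Y \<in> borel_measurable M"
    and Yb: "\<And>y. y \<in> space M \<Longrightarrow> norm (Y y) \<le> b"
  shows "integrable (PiM J (\<lambda>_. M)) (\<lambda>x. (norm (\<Sum>i\<in>J. Y (x i)))\<^sup>2)"
proof (rule prob_space.integrable_bounded)
  show "prob_space (PiM J (\<lambda>_. M))" by (rule prob_space_PiM) (rule prob_space_axioms)
  show "\<bar>(norm (\<Sum>i\<in>J. Y (x i)))\<^sup>2\<bar> \<le> (real (card J) * b)\<^sup>2"
    if "x \<in> space (PiM J (\<lambda>_. M))" for x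
  proof -
    have "norm (\<Sum>i\<in>J. Y (x i)) \<le> real (card J) * b"
      using that by (intro order_trans[OF norm_sum]) (auto intro!: order_trans[OF sum_mono[OF Yb]] simp: space_PiM)
    then show ?thesis by (simp add: power_mono)
  qed
qed measurable

lemma second_moment_sum_centered_le:
  fixes Y :: "'a \<Rightarrow> 'b::euclidean_space"
  assumes I: "finite I"
    and Ym[measurable]: "Y \<in> borel_measurable M"
    and Yb: "\<And>y. y \<in> space M \<Longrightarrow> norm (Y y) \<le> b"
    and Y0: "integral\<^sup>L M Y = 0"
  shows "(\<integral>x. (norm (\<Sum>i\<in>I. Y (x i)))\<^sup>2 \<partial>PiM I (\<lambda>_. M)) \<le> real (card I) * b\<^sup>2"
  using I
proof (induction I rule: finite_induct)
  case (insert j I)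
  interpret PP: product_prob_space "\<lambda>_. M" by unfold_locales
  let ?P = "PiM I (\<lambda>_. M)" and ?Q = "PiM (insert j I) (\<lambda>_. M)"
  interpret P: prob_space ?P by (rule prob_space_PiM) (rule prob_space_axioms)
  have b0: "b \<ge> 0" using Yb not_empty norm_ge_zero order_trans by blast
  note sq_int = integrable_norm_sum_sq[OF _ Ym Yb]
  have "(\<integral>x. (norm (\<Sum>i\<in>insert j I. Y (x i)))\<^sup>2 \<partial>?Q)
      = (\<integral>x. (\<integral>y. (norm (\<Sum>i\<in>insert j I. Y ((x(j := y)) i)))\<^sup>2 \<partial>M) \<partial>?P)"
    using insert.hyps by (intro PP.product_integral_insert sq_int) simp_all
  also have "\<dots> = (\<integral>x. (\<integral>y. (norm (Y y))\<^sup>2 \<partial>M) + (norm (\<Sum>i\<in>I. Y (x i)))\<^sup>2 \<partial>?P)"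
  proof (rule Bochner_Integration.integral_cong[OF refl])
    fix x
    have "(\<Sum>i\<in>insert j I. Y ((x(j := y)) i)) = Y y + (\<Sum>i\<in>I. Y (x i))" for y
      using insert.hyps by simp (intro sum.cong, auto)
    then show "(\<integral>y. (norm (\<Sum>i\<in>insert j I. Y ((x(j := y)) i)))\<^sup>2 \<partial>M)
        = (\<integral>y. (norm (Y y))\<^sup>2 \<partial>M) + (norm (\<Sum>i\<in>I. Y (x i)))\<^sup>2"
      by (simp add: integral_norm_add_centered_sq[OF Ym Yb Y0])
  qed
  also have "\<dots> = (\<integral>y. (norm (Y y))\<^sup>2 \<partial>M) + (\<integral>x. (norm (\<Sum>i\<in>I. Y (x i)))\<^sup>2 \<partial>?P)"
    using sq_int[OF insert.hyps(1)] by (simp add: Bochner_Integration.integral_add P.prob_space)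
  also have "\<dots> \<le> b\<^sup>2 + real (card I) * b\<^sup>2"
    using Yb b0 insert.IH
    by (intro add_mono integral_le_const integrable_bounded[where B="b\<^sup>2"] AE_I2)
       (auto simp: power_mono abs_le_square_iff)
  finally show ?case using insert.hyps by (simp add: algebra_simps)
qed simp

lemma expectation_norm_sample_mean_le:
  fixes Y :: "'a \<Rightarrow> 'b::euclidean_space"
  assumes I: "finite I" "I \<noteq> {}" and Ym[measurable]: "Y \<in> borel_measurable M"
    and Yb: "\<And>y. y \<in> space M \<Longrightarrow> norm (Y y) \<le> B" and Y0: "integral\<^sup>L M Y = 0"
  shows "(\<integral>x. norm (sample_mean I Y x) \<partial>PiM I (\<lambda>_. M)) \<le> B / sqrt (card I)"
proof -
  let ?P = "PiM I (\<lambda>_. M)" and ?f = "\<lambda>x. norm (sample_mean I Y x)"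
  interpret P: prob_space ?P by (rule prob_space_PiM) (rule prob_space_axioms)
  define m where "m = real (card I)"
  have m: "m > 0" using I by (simp add: m_def card_gt_0_iff)
  have B0: "B \<ge> 0" using Yb not_empty norm_ge_zero order_trans by blast
  have fm[measurable]: "?f \<in> borel_measurable ?P"
    using borel_measurable_sample_mean[OF order_refl Ym] by measurable
  have fb: "\<bar>?f x\<bar> \<le> B" if "x \<in> space ?P" for x
    using that B0 by (auto intro!: norm_sample_mean_le Yb simp: space_PiM)
  have "(\<integral>x. (?f x)\<^sup>2 \<partial>?P) = (\<integral>x. (norm (\<Sum>i\<in>I. Y (x i)))\<^sup>2 \<partial>?P) / m\<^sup>2"
    by (simp add: sample_mean_def m_def power_divide)
  also have "\<dots> \<le> (m * B\<^sup>2) / m\<^sup>2"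
    using second_moment_sum_centered_le[OF I(1) Ym Yb Y0] by (intro divide_right_mono) (auto simp: m_def)
  also have "\<dots> = (B / sqrt m)\<^sup>2" using m by (simp add: power2_eq_square power_divide)
  finally have Ef2: "(\<integral>x. (?f x)\<^sup>2 \<partial>?P) \<le> (B / sqrt m)\<^sup>2" .
  \<comment> \<open>Jensen: the square of the mean is at most the mean of the square\<close>
  have "integrable ?P ?f"
    using fb by (intro P.integrable_bounded[where B=B]) auto
  moreover have "integrable ?P (\<lambda>x. (?f x)\<^sup>2)"
    using fb B0 by (intro P.integrable_bounded[where B="B\<^sup>2"]) (auto simp: abs_le_square_iff)
  ultimately have "P.variance ?f = (\<integral>x. (?f x)\<^sup>2 \<partial>?P) - (integral\<^sup>L ?P ?f)\<^sup>2"
    by (rule P.variance_eq)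
  then have "(integral\<^sup>L ?P ?f)\<^sup>2 \<le> (\<integral>x. (?f x)\<^sup>2 \<partial>?P)"
    using P.variance_positive[of ?f] by linarith
  with Ef2 have "(integral\<^sup>L ?P ?f)\<^sup>2 \<le> (B / sqrt m)\<^sup>2" by linarith
  then have "integral\<^sup>L ?P ?f \<le> B / sqrt m"
    by (rule power2_le_imp_le) (use B0 m in simp)
  then show ?thesis by (simp add: m_def)
qed

lemma bounded_differences_norm_sample_mean:
  fixes Y :: "'a \<Rightarrow> 'b::real_normed_vector"
  assumes "finite I" and Yd: "\<And>y y'. y \<in> space M \<Longrightarrow> y' \<in> space M \<Longrightarrow> norm (Y y - Y y') \<le> C"
  shows "bounded_differences M I (\<lambda>x. norm (sample_mean I Y x)) (C / card I)"
  unfolding bounded_differences_def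
proof (intro ballI)
  fix x i y assume x: "x \<in> space (PiM I (\<lambda>_. M))" and i: "i \<in> I" and y: "y \<in> space M"
  have "(\<Sum>k\<in>I. Y (x k)) - (\<Sum>k\<in>I. Y ((x(i := y)) k)) = Y (x i) - Y y"
    using \<open>finite I\<close> i by (simp add: sum.remove)
  then have "sample_mean I Y x - sample_mean I Y (x(i := y)) = (1 / card I) *\<^sub>R (Y (x i) - Y y)"
    by (simp add: sample_mean_def scaleR_diff_right[symmetric])
  then have "\<bar>norm (sample_mean I Y x) - norm (sample_mean I Y (x(i := y)))\<bar> \<le> norm (Y (x i) - Y y) / card I"
    using norm_triangle_ineq3[of "sample_mean I Y x" "sample_mean I Y (x(i := y))"] by simp
  also have "\<dots> \<le> C / card I"
    using x i y by (intro divide_right_mono Yd) (auto simp: space_PiM)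
  finally show "\<bar>norm (sample_mean I Y x) - norm (sample_mean I Y (x(i := y)))\<bar> \<le> C / card I" .
qed

lemma norm_sample_mean_tail_le:
  fixes Y :: "'a \<Rightarrow> 'b::euclidean_space"
  assumes I: "finite I" "I \<noteq> {}" and Ym[measurable]: "Y \<in> borel_measurable M"
    and Yb: "\<And>y. y \<in> space M \<Longrightarrow> norm (Y y) \<le> B"
    and Yd: "\<And>y y'. y \<in> space M \<Longrightarrow> y' \<in> space M \<Longrightarrow> norm (Y y - Y y') \<le> C"
    and "C > 0" and Y0: "integral\<^sup>L M Y = 0" and d: "0 < d" "d < 1"
  shows "emeasure (PiM I (\<lambda>_. M)) {x \<in> space (PiM I (\<lambda>_. M)).
           norm (sample_mean I Y x) > B / sqrt (card I) + C * sqrt (2 * ln (1 / d) / card I)} \<le> d"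
proof -
  let ?P = "PiM I (\<lambda>_. M)" and ?f = "\<lambda>x. norm (sample_mean I Y x)"
  interpret P: prob_space ?P by (rule prob_space_PiM) (rule prob_space_axioms)
  define m where "m = real (card I)"
  have m: "m > 0" using I by (simp add: m_def card_gt_0_iff)
  have fm[measurable]: "?f \<in> borel_measurable ?P"
    using borel_measurable_sample_mean[OF order_refl Ym] by measurable
  have "B \<ge> 0" using Yb not_empty norm_ge_zero order_trans by blast
  then have fb: "\<forall>x \<in> space ?P. \<bar>?f x\<bar> \<le> B"
    by (auto intro!: norm_sample_mean_le Yb simp: space_PiM)
  define u where "u = C * sqrt (2 * ln (1 / d) / m)"
  have u: "u > 0" using \<open>C > 0\<close> d m by (simp add: u_def)
  have "{x \<in> space ?P. ?f x > B / sqrt m + u} \<subseteq> {x \<in> space ?P. ?f x - integral\<^sup>L ?P ?f \<ge> u}"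
    using expectation_norm_sample_mean_le[OF I Ym Yb Y0] by (auto simp: m_def)
  then have "emeasure ?P {x \<in> space ?P. ?f x > B / sqrt m + u}
        \<le> emeasure ?P {x \<in> space ?P. ?f x - integral\<^sup>L ?P ?f \<ge> u}"
    by (rule emeasure_mono) measurable
  also have "\<dots> \<le> ennreal (exp (- u\<^sup>2 / (2 * real (card I) * (C / m)\<^sup>2)))"
    using bounded_differences_norm_sample_mean[OF I(1) Yd] \<open>C > 0\<close> m u fb
    by (intro mcdiarmid_inequality[OF I fm]) (auto simp: m_def)
  also have "- u\<^sup>2 / (2 * real (card I) * (C / m)\<^sup>2) = - ln (1 / d)"
    using \<open>C > 0\<close> m d by (simp add: u_def m_def[symmetric] power_divide field_simps) (simp add: power2_eq_square)
  also have "exp (- ln (1 / d)) = d" using d by (simp add: ln_div)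
  finally show ?thesis by (simp add: m_def u_def)
qed

lemma norm_subsample_mean_tail_le:
  fixes Y :: "'a \<Rightarrow> 'b::euclidean_space"
  assumes J: "finite J" "I \<subseteq> J" and "I \<noteq> {}" and Ym[measurable]: "Y \<in> borel_measurable M"
    and Yb: "\<And>y. y \<in> space M \<Longrightarrow> norm (Y y) \<le> B"
    and Yd: "\<And>y y'. y \<in> space M \<Longrightarrow> y' \<in> space M \<Longrightarrow> norm (Y y - Y y') \<le> C"
    and "C > 0" and "integral\<^sup>L M Y = 0" and "0 < d" "d < 1"
    and T: "B / sqrt (card I) + C * sqrt (2 * ln (1 / d) / card I) \<le> T"
  shows "emeasure (PiM J (\<lambda>_. M)) {x \<in> space (PiM J (\<lambda>_. M)). norm (sample_mean I Y x) > T} \<le> d"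
proof -
  interpret PP: product_prob_space "\<lambda>_. M" J by unfold_locales
  have "finite I" using J finite_subset by blast
  let ?PJ = "PiM J (\<lambda>_. M)" and ?PI = "PiM I (\<lambda>_. M)"
  note [measurable] = borel_measurable_sample_mean[OF order_refl Ym]
  \<comment> \<open>the event only depends on the coordinates in I\<close>
  have "emeasure ?PJ {x \<in> space ?PJ. norm (sample_mean I Y x) > T}
      = emeasure ?PJ {x \<in> space ?PJ. norm (sample_mean I Y (restrict x I)) > T}"
    by (intro arg_cong[where f="emeasure ?PJ"]) (auto simp: sample_mean_def)
  also have "\<dots> = emeasure (distr ?PJ ?PI (\<lambda>x. restrict x I)) {x \<in> space ?PI. norm (sample_mean I Y x) > T}"
    by (rule emeasure_Collect_distr[symmetric], rule measurable_restrict_subset[OF J(2)]) measurable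
  also have "\<dots> = emeasure ?PI {x \<in> space ?PI. norm (sample_mean I Y x) > T}"
    by (simp only: PP.distr_PiM_restrict_finite[OF \<open>finite I\<close> J(2)])
  also have "\<dots> \<le> emeasure ?PI {x \<in> space ?PI.
      norm (sample_mean I Y x) > B / sqrt (card I) + C * sqrt (2 * ln (1 / d) / card I)}"
    using T by (intro emeasure_mono) (auto, measurable)
  also have "\<dots> \<le> d"
    by (rule norm_sample_mean_tail_le) (use assms \<open>finite I\<close> in auto)
  finally show ?thesis .
qed

lemma measure_pair_pmf_of_set_sections_ge:
  assumes S: "finite S" "S \<noteq> {}"
    and G: "\<And>s. s \<in> S \<Longrightarrow> G s \<in> sets M" and p: "\<And>s. s \<in> S \<Longrightarrow> measure M (G s) \<ge> p"
  defines "\<Omega> \<equiv> M \<Otimes>\<^sub>M measure_pmf (pmf_of_set S)"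
  shows "(\<Union>s\<in>S. G s \<times> {s}) \<in> sets \<Omega>" and "measure \<Omega> (\<Union>s\<in>S. G s \<times> {s}) \<ge> p"
proof -
  interpret \<Omega>: prob_space \<Omega>
    unfolding \<Omega>_def by (intro prob_space_pair prob_space_axioms prob_space_measure_pmf)
  have sets: "G s \<times> {s} \<in> sets \<Omega>" if "s \<in> S" for s
    unfolding \<Omega>_def using G[OF that] by (intro pair_measureI) auto
  then show "(\<Union>s\<in>S. G s \<times> {s}) \<in> sets \<Omega>" using S by auto
  have "measure \<Omega> (G s \<times> {s}) = measure M (G s) / card S" if s: "s \<in> S" for s
  proof -
    have "emeasure \<Omega> (G s \<times> {s}) = emeasure M (G s) * emeasure (measure_pmf (pmf_of_set S)) {s}"
      unfolding \<Omega>_def using G[OF s] by (intro measure_pmf.emeasure_pair_measure_Times) auto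
    also have "\<dots> = ennreal (measure M (G s) / card S)"
      using s S by (simp add: emeasure_eq_measure measure_pmf.emeasure_eq_measure measure_pmf_single)
        (simp add: ennreal_mult'[symmetric] divide_ennreal)
    finally show ?thesis by (simp add: \<Omega>.emeasure_eq_measure)
  qed
  then have "measure \<Omega> (\<Union>s\<in>S. G s \<times> {s}) = (\<Sum>s\<in>S. measure M (G s) / card S)"
    using S sets by (subst \<Omega>.finite_measure_finite_Union) (auto simp: disjoint_family_on_def)
  also have "\<dots> \<ge> (\<Sum>s\<in>S. p / card S)"
    using p by (intro sum_mono divide_right_mono) auto
  finally show "measure \<Omega> (\<Union>s\<in>S. G s \<times> {s}) \<ge> p" using S by simp
qed

lemma measure_two_sample_means_close_ge:
  fixes Y :: "'a \<Rightarrow> 'b::euclidean_space"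
  assumes J: "finite J" "I1 \<subseteq> J" "I2 \<subseteq> J" "I1 \<noteq> {}" "I2 \<noteq> {}" "k \<le> card I1" "k \<le> card I2"
    and Ym[measurable]: "Y \<in> borel_measurable M"
    and Yb: "\<And>y. y \<in> space M \<Longrightarrow> norm (Y y) \<le> B"
    and Yd: "\<And>y y'. y \<in> space M \<Longrightarrow> y' \<in> space M \<Longrightarrow> norm (Y y - Y y') \<le> C"
    and "C > 0" and "integral\<^sup>L M Y = 0" and \<delta>: "0 < \<delta>" "\<delta> < 1"
    and t: "\<And>m. real k \<le> m \<Longrightarrow> B / sqrt m + C * sqrt (2 * ln (2 / \<delta>) / m) \<le> t"
  defines "G \<equiv> {x \<in> space (PiM J (\<lambda>_. M)). norm (sample_mean I1 Y x) \<le> t \<and> norm (sample_mean I2 Y x) \<le> t}"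
  shows "G \<in> sets (PiM J (\<lambda>_. M))" and "measure (PiM J (\<lambda>_. M)) G \<ge> 1 - \<delta>"
proof -
  let ?P = "PiM J (\<lambda>_. M)"
  interpret P: prob_space ?P by (rule prob_space_PiM) (rule prob_space_axioms)
  define bad where "bad I = {x \<in> space ?P. norm (sample_mean I Y x) > t}" for I
  note [measurable] = borel_measurable_sample_mean[OF J(2) Ym] borel_measurable_sample_mean[OF J(3) Ym]
  have bad: "bad I1 \<union> bad I2 \<in> sets ?P" unfolding bad_def by measurable
  then show "G \<in> sets ?P" unfolding G_def by measurable
  have half: "measure ?P (bad I) \<le> \<delta> / 2" if "I \<subseteq> J" "I \<noteq> {}" "k \<le> card I" for I
  proof -
    have "emeasure ?P (bad I) \<le> \<delta> / 2"
      unfolding bad_def using that assms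
      by (intro norm_subsample_mean_tail_le[where B=B and C=C]) auto
    then show ?thesis using \<delta> by (simp add: P.emeasure_eq_measure)
  qed
  have "measure ?P (bad I1 \<union> bad I2) \<le> measure ?P (bad I1) + measure ?P (bad I2)"
    using bad by (intro measure_Un_le) (auto simp: bad_def)
  then have "measure ?P (bad I1 \<union> bad I2) \<le> \<delta>"
    using half[OF J(2,4,6)] half[OF J(3,5,7)] by linarith
  moreover have "G = space ?P - (bad I1 \<union> bad I2)" by (auto simp: G_def bad_def)
  ultimately show "measure ?P G \<ge> 1 - \<delta>"
    using P.prob_compl[OF bad] by simp
qed

lemma sample_and_subsample_means_close:
  fixes Y :: "'a \<Rightarrow> 'b::euclidean_space"
  assumes k: "0 < k" "k \<le> N" and Ym[measurable]: "Y \<in> borel_measurable M"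
    and Yb: "\<And>y. y \<in> space M \<Longrightarrow> norm (Y y) \<le> B"
    and Yd: "\<And>y y'. y \<in> space M \<Longrightarrow> y' \<in> space M \<Longrightarrow> norm (Y y - Y y') \<le> C"
    and "C > 0" and "integral\<^sup>L M Y = 0" and \<delta>: "0 < \<delta>" "\<delta> < 1"
    and t: "\<And>m. real k \<le> m \<Longrightarrow> B / sqrt m + C * sqrt (2 * ln (2 / \<delta>) / m) \<le> t"
  defines "\<Omega> \<equiv> PiM {..<N} (\<lambda>_. M) \<Otimes>\<^sub>M measure_pmf (pmf_of_set (inj_samples N k))"
  shows "\<exists>E \<in> sets \<Omega>. measure \<Omega> E \<ge> 1 - \<delta> \<and>
           (\<forall>(xs, s) \<in> E. norm ((1 / real N) *\<^sub>R (\<Sum>i<N. Y (xs i))) \<le> t \<and>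
                           norm ((1 / real k) *\<^sub>R (\<Sum>i<k. Y (xs (s i)))) \<le> t)"
proof -
  let ?P = "PiM {..<N} (\<lambda>_. M)"
  interpret P: prob_space ?P by (rule prob_space_PiM) (rule prob_space_axioms)
  define G where "G s = {xs \<in> space ?P. norm (sample_mean {..<N} Y xs) \<le> t \<and>
    norm (sample_mean (s ` {..<k}) Y xs) \<le> t}" for s
  have "G s \<in> sets ?P \<and> measure ?P (G s) \<ge> 1 - \<delta>" if s: "s \<in> inj_samples N k" for s
    unfolding G_def using inj_samplesD(1,2)[OF s] k
    by (intro conjI measure_two_sample_means_close_ge[where B=B and C=C and k=k]) (use assms in auto)
  then have "(\<Union>s\<in>inj_samples N k. G s \<times> {s}) \<in> sets \<Omega> \<and>
      measure \<Omega> (\<Union>s\<in>inj_samples N k. G s \<times> {s}) \<ge> 1 - \<delta>"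
    unfolding \<Omega>_def using finite_inj_samples inj_samples_nonempty[OF k(2)]
    by (intro conjI P.measure_pair_pmf_of_set_sections_ge) auto
  moreover have "norm ((1 / real N) *\<^sub>R (\<Sum>i<N. Y (xs i))) \<le> t \<and>
                 norm ((1 / real k) *\<^sub>R (\<Sum>i<k. Y (xs (s i)))) \<le> t"
    if "(xs, s) \<in> (\<Union>s\<in>inj_samples N k. G s \<times> {s})" for xs s
    using that by (auto simp: G_def inj_samplesD(3) sample_mean_def[of "{..<N}"])
  ultimately show ?thesis by blast
qed

lemma outer_second_moment:
  fixes phi :: "'a \<Rightarrow> real^'n"
  assumes [measurable]: "phi \<in> borel_measurable M" and K: "\<And>x. norm (phi x) \<le> K"
  defines "Sig \<equiv> \<integral>x. outer (phi x) \<partial>M"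
  shows "transpose Sig = Sig" and "norm Sig \<le> K\<^sup>2"
    and "integral\<^sup>L M (\<lambda>x. outer (phi x) - Sig) = 0"
    and "norm (outer (phi x) - Sig) \<le> 2 * K\<^sup>2"
proof -
  have bound: "norm (outer (phi x)) \<le> K\<^sup>2" for x
    using K[of x] norm_ge_zero by (simp add: norm_outer power_mono)
  then have int: "integrable M (\<lambda>x. outer (phi x))"
    by (intro integrable_const_bound[where B="K\<^sup>2"]) auto
  then show "transpose Sig = Sig"
    unfolding Sig_def by (rule transpose_integral_outer)
  show Sig: "norm Sig \<le> K\<^sup>2"
    unfolding Sig_def using int bound
    by (intro order_trans[OF integral_norm_bound] integral_le_const) auto
  show "norm (outer (phi x) - Sig) \<le> 2 * K\<^sup>2"
    using norm_triangle_ineq4[of "outer (phi x)" Sig] bound[of x] Sig by linarith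
  show "integral\<^sup>L M (\<lambda>x. outer (phi x) - Sig) = 0"
    using int by (simp add: Sig_def prob_space)
qed

lemma sample_and_subsample_second_moments_close:
  fixes phi :: "'a \<Rightarrow> real^'n"
  assumes phi[measurable]: "phi \<in> borel_measurable M" and K: "\<And>x. norm (phi x) \<le> K" "K \<noteq> 0"
    and k: "0 < k" "k \<le> N" and \<delta>: "0 < \<delta>" "\<delta> < 1"
    and t: "\<And>m. real k \<le> m \<Longrightarrow> 2 * K\<^sup>2 / sqrt m + sqrt 2 * K\<^sup>2 * sqrt (2 * ln (2 / \<delta>) / m) \<le> t"
  defines "Sig \<equiv> \<integral>x. outer (phi x) \<partial>M"
    and "\<Omega> \<equiv> PiM {..<N} (\<lambda>_. M) \<Otimes>\<^sub>M measure_pmf (pmf_of_set (inj_samples N k))"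
  shows "\<exists>E \<in> sets \<Omega>. measure \<Omega> E \<ge> 1 - \<delta> \<and> (\<forall>(xs, s) \<in> E.
           norm ((1 / real N) *\<^sub>R (\<Sum>i<N. outer (phi (xs i))) - Sig) \<le> t \<and>
           norm ((1 / real k) *\<^sub>R (\<Sum>i<k. outer (phi (xs (s i)))) - Sig) \<le> t)"
proof -
  note Sig = outer_second_moment[OF phi K(1), folded Sig_def]
  have "\<exists>E \<in> sets \<Omega>. measure \<Omega> E \<ge> 1 - \<delta> \<and> (\<forall>(xs, s) \<in> E.
      norm ((1 / real N) *\<^sub>R (\<Sum>i<N. outer (phi (xs i)) - Sig)) \<le> t \<and>
      norm ((1 / real k) *\<^sub>R (\<Sum>i<k. outer (phi (xs (s i))) - Sig)) \<le> t)"
    unfolding \<Omega>_def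
    by (rule sample_and_subsample_means_close[where B="2 * K\<^sup>2" and C="sqrt 2 * K\<^sup>2"])
      (use k \<delta> t K Sig(3,4) norm_outer_diff_le[OF K(1) K(1)] in auto)
  with k show ?thesis by (simp add: mean_diff_const)
qed

end

section \<open>The sample size condition\<close>

lemma one_plus_sq_le_ln2_plus_sq:
  fixes s :: real
  shows "(1 + s)\<^sup>2 \<le> 8/3 * (ln 2 + s\<^sup>2)"
  using ln2_ge_two_thirds sum_squares_ge_zero[of "s - 3/5" 0]
  by (simp add: power2_eq_square algebra_simps)

lemma sample_size_threshold:
  fixes \<delta> r k m :: real
  assumes \<delta>: "0 < \<delta>" "\<delta> < 1" and "1 \<le> r" and k: "0 < k" "k \<le> m"
  shows "1 / sqrt m + sqrt (ln (2 / \<delta>) / m) \<le> sqrt (8 / (3 * k) * ln (4 * r / \<delta>))"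
proof -
  define s where "s = sqrt (ln (2 / \<delta>))"
  have s: "s \<ge> 0" "s\<^sup>2 = ln (2 / \<delta>)" using \<delta> by (simp_all add: s_def)
  have "1 / sqrt m + sqrt (ln (2 / \<delta>) / m) = (1 + s) / sqrt m"
    by (simp add: s_def real_sqrt_divide add_divide_distrib)
  also have "\<dots> \<le> (1 + s) / sqrt k"
    using k s by (intro divide_left_mono) auto
  also have "1 + s \<le> sqrt (8 / 3 * ln (4 * r / \<delta>))"
  proof (rule real_le_rsqrt)
    have "ln 2 + ln (2 / \<delta>) = ln (4 / \<delta>)" using \<delta> ln_mult[of 2 "2 / \<delta>"] by simp
    also have "\<dots> \<le> ln (4 * r / \<delta>)" using \<delta> \<open>1 \<le> r\<close> by (simp add: divide_right_mono)
    finally have "8 / 3 * (ln 2 + s\<^sup>2) \<le> 8 / 3 * ln (4 * r / \<delta>)"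
      using s by simp
    then show "(1 + s)\<^sup>2 \<le> 8 / 3 * ln (4 * r / \<delta>)"
      using one_plus_sq_le_ln2_plus_sq[of s] by linarith
  qed
  then have "(1 + s) / sqrt k \<le> sqrt (8 / 3 * ln (4 * r / \<delta>)) / sqrt k"
    using k by (intro divide_right_mono) auto
  also have "\<dots> = sqrt (8 / (3 * k) * ln (4 * r / \<delta>))"
    by (simp add: real_sqrt_divide[symmetric])
  finally show ?thesis .
qed

lemma sample_size_consequences:
  fixes \<kappa> lam \<delta> r k :: real
  assumes "0 < \<kappa>" "0 < lam" "0 < \<delta>" "\<delta> < 1" "1 \<le> r"
    and k: "k \<ge> 8/3 * ln (4 * r / \<delta>) * (4 * \<kappa> / lam)\<^sup>2"
  defines "X \<equiv> sqrt (8 / (3 * k) * ln (4 * r / \<delta>))"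
  shows "0 < k" and "2 * \<kappa> * X \<le> lam / 2"
    and "\<And>m. k \<le> m \<Longrightarrow> 2 * \<kappa> / sqrt m + sqrt 2 * \<kappa> * sqrt (2 * ln (2 / \<delta>) / m) \<le> 2 * \<kappa> * X"
proof -
  have "\<delta> < 4 * r" using assms by linarith
  then have "0 < 8/3 * ln (4 * r / \<delta>) * (4 * \<kappa> / lam)\<^sup>2" using assms by simp
  then show "0 < k" using k by linarith
  have "X \<le> lam / (4 * \<kappa>)"
    unfolding X_def
  proof (rule real_le_lsqrt)
    show "8 / (3 * k) * ln (4 * r / \<delta>) \<le> (lam / (4 * \<kappa>))\<^sup>2"
      using k \<open>0 < k\<close> assms(1,2) by (simp add: power_divide field_simps)
  qed (use assms(1,2) in simp_all)
  then show "2 * \<kappa> * X \<le> lam / 2"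
    using assms(1) by (simp add: field_simps)
  show "2 * \<kappa> / sqrt m + sqrt 2 * \<kappa> * sqrt (2 * ln (2 / \<delta>) / m) \<le> 2 * \<kappa> * X" if "k \<le> m" for m
  proof -
    have "sqrt 2 * sqrt (2 * ln (2 / \<delta>) / m) = sqrt (2 * 2) * sqrt (ln (2 / \<delta>) / m)"
      by (simp only: real_sqrt_mult[symmetric] times_divide_eq_right mult.assoc)
    then have "2 * \<kappa> / sqrt m + sqrt 2 * \<kappa> * sqrt (2 * ln (2 / \<delta>) / m)
        = 2 * \<kappa> * (1 / sqrt m + sqrt (ln (2 / \<delta>) / m))"
      by (simp add: algebra_simps)
    also have "\<dots> \<le> 2 * \<kappa> * X"
      unfolding X_def using sample_size_threshold[OF assms(3-5) \<open>0 < k\<close> that] assms(1)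
      by (intro mult_left_mono) auto
    finally show ?thesis .
  qed
qed

theorem theoremA4:
  fixes \<sigma> K \<delta> :: real
    and M :: "(real^'d) measure"
    and phi_r :: "real^'d \<Rightarrow> real^'r"
    and L :: "real^'r^'r"
    and N k :: nat
  defines "phiL \<equiv> (\<lambda>x. transpose L *v phi_r x)"
  defines "SigmaX \<equiv> integral\<^sup>L M (\<lambda>x. outer (phiL x))"
  defines "\<Omega> \<equiv> PiM {..<N} (\<lambda>_. M) \<Otimes>\<^sub>M measure_pmf (pmf_of_set (inj_samples N k))"
  assumes "\<sigma> > 0"
    and "prob_space M" and "sets M = sets borel"
    and "phi_r \<in> borel_measurable borel"
    and "\<forall>x. norm (phiL x) \<le> K"
    and "lambda_min SigmaX > 0"
    and "\<delta> > 0"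
    and "k \<le> N"
    and "real k \<ge> 8/3 * ln (4 * real CARD('r) / \<delta>) * (4 * K\<^sup>2 / lambda_min SigmaX)\<^sup>2"
  shows "\<exists>E \<in> sets \<Omega>. measure \<Omega> E \<ge> 1 - \<delta> \<and>
    (\<forall>(xs, s) \<in> E. \<forall>(N'::nat) (xt :: nat \<Rightarrow> real^'d).
      let SigN = (1 / real N) *\<^sub>R (\<Sum>i<N. outer (phiL (xs i)));
          Sigk = (1 / real k) *\<^sub>R (\<Sum>i<k. outer (phiL (xs (s i))));
          SB = S_mat phiL ((real N / \<sigma>\<^sup>2) *\<^sub>R SigN + mat 1) xt;
          SBk = S_mat phiL ((real N / \<sigma>\<^sup>2) *\<^sub>R Sigk + mat 1) xt
      in spec_norm N' (\<lambda>i j. SBk i j - SB i j)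
         \<le> real N' * (4 * K ^ 4 / (\<sigma> / real N + lambda_min SigmaX / (2 * \<sigma>))\<^sup>2)
             * (1 / real N) * sqrt (8 / (3 * real k) * ln (4 * real CARD('r) / \<delta>)))"
proof -
  interpret prob_space M by fact
  have K: "\<And>x. norm (phiL x) \<le> K" using assms(8) by (rule spec)
  have "phi_r \<in> borel_measurable M"
    using assms(6,7) measurable_cong_sets by blast
  then have phiL: "phiL \<in> borel_measurable M"
    unfolding phiL_def by (rule measurable_compose[OF _ borel_measurable_continuous_onI[OF
        matrix_vector_mult_linear_continuous_on]])
  note SigmaX = outer_second_moment[OF phiL K, folded SigmaX_def]
  have "0 < K\<^sup>2" using assms(9) lambda_min_le_norm[OF SigmaX(1)] SigmaX(2) by linarith
  show ?thesis
  proof (cases "\<delta> < 1")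
    case True
    let ?X = "sqrt (8 / (3 * real k) * ln (4 * real CARD('r) / \<delta>))"
    have "1 \<le> real CARD('r)" by simp
    note k = sample_size_consequences[OF \<open>0 < K\<^sup>2\<close> assms(9,10) True this assms(12)]
    then have "0 < k" "0 < N" using assms(11) by simp_all
    with k(3) obtain E where E: "E \<in> sets \<Omega>" "measure \<Omega> E \<ge> 1 - \<delta>" and close: "\<forall>(xs, s) \<in> E.
        norm ((1 / real N) *\<^sub>R (\<Sum>i<N. outer (phiL (xs i))) - SigmaX) \<le> 2 * K\<^sup>2 * ?X \<and>
        norm ((1 / real k) *\<^sub>R (\<Sum>i<k. outer (phiL (xs (s i)))) - SigmaX) \<le> 2 * K\<^sup>2 * ?X"
      using sample_and_subsample_second_moments_close[OF phiL K _ _ assms(11,10) True,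
          where t="2 * K\<^sup>2 * ?X", folded SigmaX_def \<Omega>_def] \<open>0 < K\<^sup>2\<close> by auto
    have "spec_norm N' (\<lambda>i j.
          S_mat phiL ((real N / \<sigma>\<^sup>2) *\<^sub>R ((1 / real k) *\<^sub>R (\<Sum>i<k. outer (phiL (xs (s i))))) + mat 1) xt i j
        - S_mat phiL ((real N / \<sigma>\<^sup>2) *\<^sub>R ((1 / real N) *\<^sub>R (\<Sum>i<N. outer (phiL (xs i)))) + mat 1) xt i j)
        \<le> real N' * (4 * K ^ 4 / (\<sigma> / real N + lambda_min SigmaX / (2 * \<sigma>))\<^sup>2) * (1 / real N) * ?X"
      if "(xs, s) \<in> E" for xs s N' xt
      using close that
      by (intro spec_norm_S_mat_posterior_diff_le[OF SigmaX(1) assms(4) \<open>0 < N\<close> assms(9) _ _ k(2) K]) auto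
    with E show ?thesis by (auto simp: Let_def)
  qed (auto intro: bexI[of _ "{}"])
qed

end
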